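(* Let $Q=(I,\Omega)$ be a quiver, $\theta\in\mathbb{Z}^I$, $\alpha\in\mathbb{N}^I$, and $d^*=(d^1,\dots,d^s)$ a tuple of nonzero vectors in $\mathbb{N}^I$ with $d^1+\cdots+d^s=\alpha$. Let $F^*$ be a flag of type $d^*$ in $\bigoplus_{i\in I}\mathbb{C}^{\alpha_i}$, and let $\varphi:\mathrm{Rep}(Q,\alpha)_{F^*}\to\prod_{k=1}^s\mathrm{Rep}(Q,d^k)$ and $\mathrm{Rep}(Q,\alpha)^{ss}_{F^*}=\varphi^{-1}\bigl(\prod_{k=1}^s\mathrm{Rep}(Q,d^k)^{ss}\bigr)$ be as in the context. If $\mathrm{Rep}(Q,\alpha)^{ss}_{F^*}$ is nonempty, then $\dim \mathrm{Rep}(Q,\alpha)^{ss}_{F^*}=\dim\mathrm{Rep}(Q,\alpha)_{F^*}$.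
   Context: $\mathrm{Rep}(Q,\beta)$ is the vector space of complex representations of $Q$ with dimension vector $\beta$. A flag of type $d^*$ is a chain $0=F^0\subset F^1\subset\cdots\subset F^s=\bigoplus_i\mathbb{C}^{\alpha_i}$ of $I$-graded subspaces with $\dim_{I} F^k/F^{k-1}=d^k$. $\mathrm{Rep}(Q,\alpha)_{F^*}$ is the subspace of representations $x$ with $x_h(F^k_i)\subseteq F^k_j$ for every arrow $h:i\to j$ and every $k$. The map $\varphi$ sends $x$ to the tuple of representations induced on the subquotients $F^k/F^{k-1}$ (each identified with $\bigoplus_i\mathbb{C}^{d^k_i}$ by fixed choices of bases). The slope of a nonzero representation $V$ with dimension vector $\beta$ is $\mu(V)=\bigl(\sum_i\theta_i\beta_i\bigr)/\bigl(\sum_i\beta_i\bigr)$; $V$ is semistable if $\mu(U)\leq\mu(V)$ for every nonzero subrepresentation $U$ of $V$, and $\mathrm{Rep}(Q,\beta)^{ss}$ is the set of semistable representations. *)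

theory Defs
  imports Complex_Main "HOL-Library.Extended_Nat"
begin

text \<open>Quiver Q = (I, Omega): vertices of a finite type 'v, arrows of a finite type 'a,
  with source map src and target map tgt.  A representation x with dimension vector
  beta assigns to each arrow h a complex matrix x h of size beta(tgt h) x beta(src h),
  stored as the function (i,j) |-> x h i j, zero outside the bounds.\<close>

type_synonym 'a qrep = "'a \<Rightarrow> nat \<Rightarrow> nat \<Rightarrow> complex"

definition Rep :: "('a \<Rightarrow> 'v) \<Rightarrow> ('a \<Rightarrow> 'v) \<Rightarrow> ('v \<Rightarrow> nat) \<Rightarrow> 'a qrep set" where
  "Rep src tgt \<beta> = {x. \<forall>h i j. \<not> (i < \<beta> (tgt h) \<and> j < \<beta> (src h)) \<longrightarrow> x h i j = 0}"

text \<open>Vectors of C^n: functions nat => complex vanishing from index n on.\<close>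

definition cvec :: "nat \<Rightarrow> (nat \<Rightarrow> complex) set" where
  "cvec n = {v. \<forall>l\<ge>n. v l = 0}"

definition csubspace :: "nat \<Rightarrow> (nat \<Rightarrow> complex) set \<Rightarrow> bool" where
  "csubspace n U \<longleftrightarrow> U \<subseteq> cvec n \<and> (\<lambda>_. 0) \<in> U \<and>
     (\<forall>u\<in>U. \<forall>v\<in>U. (\<lambda>l. u l + v l) \<in> U) \<and> (\<forall>c. \<forall>u\<in>U. (\<lambda>l. c * u l) \<in> U)"

definition clin_indep :: "(nat \<Rightarrow> complex) set \<Rightarrow> bool" where
  "clin_indep A \<longleftrightarrow> (\<forall>c. (\<lambda>l. \<Sum>v\<in>A. c v * v l) = (\<lambda>_. 0) \<longrightarrow> (\<forall>v\<in>A. c v = 0))"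

definition cdim :: "(nat \<Rightarrow> complex) set \<Rightarrow> nat" where
  "cdim U = Max {card A | A. finite A \<and> A \<subseteq> U \<and> clin_indep A}"

definition matvec :: "nat \<Rightarrow> nat \<Rightarrow> (nat \<Rightarrow> nat \<Rightarrow> complex) \<Rightarrow> (nat \<Rightarrow> complex) \<Rightarrow> (nat \<Rightarrow> complex)" where
  "matvec m n M v = (\<lambda>i. if i < m then (\<Sum>j<n. M i j * v j) else 0)"

definition slope :: "('v::finite \<Rightarrow> int) \<Rightarrow> ('v \<Rightarrow> nat) \<Rightarrow> real" where
  "slope \<theta> \<beta> = (\<Sum>i\<in>UNIV. real_of_int (\<theta> i) * real (\<beta> i)) / (\<Sum>i\<in>UNIV. real (\<beta> i))"

definition semistable :: "('a \<Rightarrow> 'v) \<Rightarrow> ('a \<Rightarrow> 'v) \<Rightarrow> ('v::finite \<Rightarrow> int) \<Rightarrow> ('v \<Rightarrow> nat) \<Rightarrow> 'a qrep \<Rightarrow> bool" where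
  "semistable src tgt \<theta> \<beta> y \<longleftrightarrow> y \<in> Rep src tgt \<beta> \<and>
     (\<forall>U :: 'v \<Rightarrow> (nat \<Rightarrow> complex) set.
        (\<forall>i. csubspace (\<beta> i) (U i)) \<and>
        (\<forall>h. \<forall>v\<in>U (src h). matvec (\<beta> (tgt h)) (\<beta> (src h)) (y h) v \<in> U (tgt h)) \<and>
        (\<exists>i. U i \<noteq> {\<lambda>_. 0})
        \<longrightarrow> slope \<theta> (\<lambda>i. cdim (U i)) \<le> slope \<theta> \<beta>)"

text \<open>A flag F^* of type d^* = (d 1, ..., d s) together with fixed bases of the
  subquotients is encoded by an adapted basis: for each vertex i an invertible
  alpha_i x alpha_i matrix g i (inverse ginv i) whose columns D_{k-1}(i), ..., D_k(i) - 1
  lift the chosen basis of F^k_i / F^{k-1}_i, where D_k(i) = d^1_i + ... + d^k_i.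
  Thus F^k_i is the span of the first D_k(i) columns of g i.\<close>

definition psum :: "(nat \<Rightarrow> 'v \<Rightarrow> nat) \<Rightarrow> nat \<Rightarrow> 'v \<Rightarrow> nat" where
  "psum d k i = (\<Sum>m\<in>{1..k}. d m i)"

definition flagsp :: "('v \<Rightarrow> nat) \<Rightarrow> (nat \<Rightarrow> 'v \<Rightarrow> nat) \<Rightarrow> ('v \<Rightarrow> nat \<Rightarrow> nat \<Rightarrow> complex)
     \<Rightarrow> nat \<Rightarrow> 'v \<Rightarrow> (nat \<Rightarrow> complex) set" where
  "flagsp \<alpha> d g k i = {v. \<exists>c. v = (\<lambda>p. if p < \<alpha> i then (\<Sum>l<psum d k i. c l * g i p l) else 0)}"

definition is_adapted_basis :: "('v \<Rightarrow> nat) \<Rightarrow> ('v \<Rightarrow> nat \<Rightarrow> nat \<Rightarrow> complex)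
     \<Rightarrow> ('v \<Rightarrow> nat \<Rightarrow> nat \<Rightarrow> complex) \<Rightarrow> bool" where
  "is_adapted_basis \<alpha> g ginv \<longleftrightarrow>
     (\<forall>i p q. p < \<alpha> i \<and> q < \<alpha> i \<longrightarrow>
        (\<Sum>l<\<alpha> i. g i p l * ginv i l q) = (if p = q then 1 else 0) \<and>
        (\<Sum>l<\<alpha> i. ginv i p l * g i l q) = (if p = q then 1 else 0))"

definition RepF :: "('a \<Rightarrow> 'v) \<Rightarrow> ('a \<Rightarrow> 'v) \<Rightarrow> ('v \<Rightarrow> nat) \<Rightarrow> nat \<Rightarrow> (nat \<Rightarrow> 'v \<Rightarrow> nat)
     \<Rightarrow> ('v \<Rightarrow> nat \<Rightarrow> nat \<Rightarrow> complex) \<Rightarrow> 'a qrep set" where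
  "RepF src tgt \<alpha> s d g = {x \<in> Rep src tgt \<alpha>. \<forall>k\<in>{1..s}. \<forall>h. \<forall>v\<in>flagsp \<alpha> d g k (src h).
       matvec (\<alpha> (tgt h)) (\<alpha> (src h)) (x h) v \<in> flagsp \<alpha> d g k (tgt h)}"

text \<open>The k-th component of phi: the matrix of the map induced by x h on
  F^k/F^{k-1}, in the chosen bases (i.e. the k-th diagonal block of ginv * x h * g).\<close>

definition phi :: "('a \<Rightarrow> 'v) \<Rightarrow> ('a \<Rightarrow> 'v) \<Rightarrow> ('v \<Rightarrow> nat) \<Rightarrow> (nat \<Rightarrow> 'v \<Rightarrow> nat)
     \<Rightarrow> ('v \<Rightarrow> nat \<Rightarrow> nat \<Rightarrow> complex) \<Rightarrow> ('v \<Rightarrow> nat \<Rightarrow> nat \<Rightarrow> complex) \<Rightarrow> nat \<Rightarrow> 'a qrep \<Rightarrow> 'a qrep" where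
  "phi src tgt \<alpha> d g ginv k x = (\<lambda>h p q.
     if p < d k (tgt h) \<and> q < d k (src h) then
       (\<Sum>a<\<alpha> (tgt h). \<Sum>b<\<alpha> (src h).
          ginv (tgt h) (psum d (k - 1) (tgt h) + p) a * x h a b * g (src h) b (psum d (k - 1) (src h) + q))
     else 0)"

definition RepFss :: "('a \<Rightarrow> 'v) \<Rightarrow> ('a \<Rightarrow> 'v) \<Rightarrow> ('v::finite \<Rightarrow> int) \<Rightarrow> ('v \<Rightarrow> nat) \<Rightarrow> nat
     \<Rightarrow> (nat \<Rightarrow> 'v \<Rightarrow> nat) \<Rightarrow> ('v \<Rightarrow> nat \<Rightarrow> nat \<Rightarrow> complex) \<Rightarrow> ('v \<Rightarrow> nat \<Rightarrow> nat \<Rightarrow> complex) \<Rightarrow> 'a qrep set" where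
  "RepFss src tgt \<theta> \<alpha> s d g ginv = {x \<in> RepF src tgt \<alpha> s d g.
       \<forall>k\<in>{1..s}. semistable src tgt \<theta> (d k) (phi src tgt \<alpha> d g ginv k x)}"

text \<open>Zariski topology on the space of representations (coordinates x h i j) and
  the dimension of a subset as the Krull dimension of its Zariski closure.\<close>

inductive polyfun :: "('a qrep \<Rightarrow> complex) \<Rightarrow> bool" where
  pconst: "polyfun (\<lambda>_. c)"
| pcoord: "polyfun (\<lambda>x. x h i j)"
| padd: "polyfun f \<Longrightarrow> polyfun g \<Longrightarrow> polyfun (\<lambda>x. f x + g x)"
| pmult: "polyfun f \<Longrightarrow> polyfun g \<Longrightarrow> polyfun (\<lambda>x. f x * g x)"

definition zclosed :: "'a qrep set \<Rightarrow> bool" where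
  "zclosed Z \<longleftrightarrow> (\<exists>P. (\<forall>p\<in>P. polyfun p) \<and> Z = {x. \<forall>p\<in>P. p x = 0})"

definition zclosure :: "'a qrep set \<Rightarrow> 'a qrep set" where
  "zclosure S = \<Inter>{Z. zclosed Z \<and> S \<subseteq> Z}"

definition zirreducible :: "'a qrep set \<Rightarrow> bool" where
  "zirreducible Z \<longleftrightarrow> zclosed Z \<and> Z \<noteq> {} \<and>
     (\<forall>A B. zclosed A \<and> zclosed B \<and> Z \<subseteq> A \<union> B \<longrightarrow> Z \<subseteq> A \<or> Z \<subseteq> B)"

definition zdim :: "'a qrep set \<Rightarrow> enat" where
  "zdim S = Sup {enat n | n. \<exists>C :: nat \<Rightarrow> 'a qrep set.
      (\<forall>j\<le>n. zirreducible (C j)) \<and> (\<forall>j<n. C j \<subset> C (Suc j)) \<and> C n \<subseteq> zclosure S}"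

end

theory Submission
  imports Defs "HOL-Library.Function_Algebras" "HOL-Analysis.Analysis"
    "HOL-Computational_Algebra.Polynomial"
begin

text \<open>Since \<open>RepF\<close> is a linear space and \<open>phi\<close> is linear, the line \<open>x\<^sub>0 + t (y - x\<^sub>0)\<close> from a
  point \<open>x\<^sub>0\<close> of \<open>RepFss\<close> to any \<open>y\<close> in \<open>RepF\<close> stays in \<open>RepF\<close>, and its images under \<open>phi\<close> are
  affine in \<open>t\<close>. Semistability along such a family is an open condition on \<open>t\<close>: only finitely
  many dimension vectors can destabilise, and a limit of subrepresentations of a fixed
  dimension vector is again one, because their orthonormal frames range over a compact set.
  Hence infinitely many points of the line lie in \<open>RepFss\<close>, so every polynomial vanishing on
  \<open>RepFss\<close> vanishes on the whole line, in particular at \<open>y\<close>. Thus \<open>RepFss\<close> and \<open>RepF\<close> have the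
  same Zariski closure, and \<open>zdim\<close> only depends on the closure.\<close>

section \<open>Linear algebra in \<open>\<complex>\<^sup>n\<close>\<close>

definition cscale :: "complex \<Rightarrow> (nat \<Rightarrow> complex) \<Rightarrow> nat \<Rightarrow> complex" where
  "cscale c v = (\<lambda>l. c * v l)"

interpretation cvs: vector_space cscale
  by unfold_locales (auto simp: cscale_def fun_eq_iff algebra_simps)

lemma sum_cscale: "(\<Sum>v\<in>A. cscale (c v) (f v)) = (\<lambda>l. \<Sum>v\<in>A. c v * f v l)"
  by (induction A rule: infinite_finite_induct) (auto simp: cscale_def fun_eq_iff)

lemma clin_indep_iff_independent:
  assumes "finite A"
  shows "clin_indep A \<longleftrightarrow> cvs.independent A"
  using cvs.dependent_finite[OF assms]
  by (auto simp: clin_indep_def sum_cscale zero_fun_def)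

lemma csubspace_imp_subspace: "csubspace N U \<Longrightarrow> cvs.subspace U"
  unfolding csubspace_def cvs.subspace_def by (auto simp: zero_fun_def plus_fun_def cscale_def)

definition cspan :: "(nat \<Rightarrow> nat \<Rightarrow> complex) \<Rightarrow> nat \<Rightarrow> (nat \<Rightarrow> complex) set" where
  "cspan u m = range (\<lambda>c l. \<Sum>r<m. c r * u r l)"

lemma cspan_base: "r < m \<Longrightarrow> u r \<in> cspan u m"
  unfolding cspan_def
  by (rule range_eqI[of _ _ "\<lambda>r'. if r' = r then 1 else 0"])
    (auto simp: fun_eq_iff if_distrib[of "\<lambda>x. x * y" for y] cong: if_cong)

lemma cspan_subset_span: "cspan u m \<subseteq> cvs.span (u ` {..<m})"
proof
  fix v assume "v \<in> cspan u m"
  then obtain c where "v = (\<lambda>l. \<Sum>r<m. c r * u r l)" by (auto simp: cspan_def)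
  then have "v = (\<Sum>r<m. cscale (c r) (u r))" by (simp add: sum_cscale)
  also have "\<dots> \<in> cvs.span (u ` {..<m})"
    by (intro cvs.span_sum cvs.span_scale cvs.span_base) auto
  finally show "v \<in> cvs.span (u ` {..<m})" .
qed

lemma cspan_subset_csubspace:
  assumes "csubspace N U" "\<forall>r<m. u r \<in> U"
  shows "cspan u m \<subseteq> U"
proof
  fix v assume "v \<in> cspan u m"
  then obtain c where "v = (\<lambda>l. \<Sum>r<m. c r * u r l)" by (auto simp: cspan_def)
  then have "v = (\<Sum>r<m. cscale (c r) (u r))" by (simp add: sum_cscale)
  also have "\<dots> \<in> U"
    using assms by (intro cvs.subspace_sum cvs.subspace_scale csubspace_imp_subspace) auto
  finally show "v \<in> U" .
qed

lemma csubspace_cspan: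
  assumes "\<forall>r<m. u r \<in> cvec N"
  shows "csubspace N (cspan u m)"
  unfolding csubspace_def
proof (intro conjI ballI allI)
  show "cspan u m \<subseteq> cvec N" using assms by (auto simp: cspan_def cvec_def)
  show "(\<lambda>_. 0) \<in> cspan u m" unfolding cspan_def by (rule range_eqI[of _ _ "\<lambda>_. 0"]) simp
next
  fix v w assume "v \<in> cspan u m" "w \<in> cspan u m"
  then obtain c1 c2 where "v = (\<lambda>l. \<Sum>r<m. c1 r * u r l)" "w = (\<lambda>l. \<Sum>r<m. c2 r * u r l)"
    by (auto simp: cspan_def)
  then show "(\<lambda>l. v l + w l) \<in> cspan u m" unfolding cspan_def
    by (intro range_eqI[of _ _ "\<lambda>r. c1 r + c2 r"]) (simp add: sum.distrib distrib_right)
next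
  fix c v assume "v \<in> cspan u m"
  then obtain c1 where "v = (\<lambda>l. \<Sum>r<m. c1 r * u r l)" by (auto simp: cspan_def)
  then show "(\<lambda>l. c * v l) \<in> cspan u m" unfolding cspan_def
    by (intro range_eqI[of _ _ "\<lambda>r. c * c1 r"]) (simp add: sum_distrib_left mult.assoc)
qed

lemma card_le_if_clin_indep_subset_cspan:
  assumes "finite A" "clin_indep A" "A \<subseteq> cspan u m"
  shows "card A \<le> m"
proof -
  have "card A \<le> card (u ` {..<m})"
    using cvs.independent_span_bound assms cspan_subset_span clin_indep_iff_independent
    by (metis finite_imageI finite_lessThan order_trans)
  also have "\<dots> \<le> m" using card_image_le[of "{..<m}" u] by simp
  finally show ?thesis .
qed

definition unit_cvec :: "nat \<Rightarrow> nat \<Rightarrow> complex" where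
  "unit_cvec r = (\<lambda>l. if l = r then 1 else 0)"

lemma cvec_subset_cspan_unit_cvec: "cvec N \<subseteq> cspan unit_cvec N"
proof
  fix v assume v: "v \<in> cvec N"
  have "v = (\<lambda>l. \<Sum>r<N. v r * unit_cvec r l)"
    using v by (auto simp: fun_eq_iff cvec_def unit_cvec_def if_distrib cong: if_cong)
  then show "v \<in> cspan unit_cvec N" unfolding cspan_def by blast
qed

lemma finite_clin_indep_cards:
  assumes "U \<subseteq> cvec N"
  shows "finite {card A | A. finite A \<and> A \<subseteq> U \<and> clin_indep A}"
proof (rule finite_subset)
  show "{card A | A. finite A \<and> A \<subseteq> U \<and> clin_indep A} \<subseteq> {..N}"
  proof
    fix n assume "n \<in> {card A | A. finite A \<and> A \<subseteq> U \<and> clin_indep A}"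
    then obtain A where A: "n = card A" "finite A" "A \<subseteq> U" "clin_indep A" by blast
    then have "A \<subseteq> cspan unit_cvec N"
      using A(3) assms cvec_subset_cspan_unit_cvec by blast
    then show "n \<in> {..N}" using card_le_if_clin_indep_subset_cspan A by simp
  qed
qed simp

lemma cdim_attained:
  assumes "U \<subseteq> cvec N"
  obtains A where "finite A" "A \<subseteq> U" "clin_indep A" "card A = cdim U"
proof -
  let ?C = "{card A | A. finite A \<and> A \<subseteq> U \<and> clin_indep A}"
  have "0 \<in> ?C" by (intro CollectI exI[of _ "{}"]) (auto simp: clin_indep_def)
  then have "?C \<noteq> {}" by blast
  then have "cdim U \<in> ?C" unfolding cdim_def by (rule Max_in[OF finite_clin_indep_cards[OF assms]])
  then show ?thesis using that by auto
qed

lemma card_le_cdim: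
  assumes "U \<subseteq> cvec N" "finite A" "A \<subseteq> U" "clin_indep A"
  shows "card A \<le> cdim U"
  unfolding cdim_def by (rule Max_ge[OF finite_clin_indep_cards[OF assms(1)]]) (use assms in blast)

lemma cdim_le_if_subset_cspan:
  assumes "U \<subseteq> cvec N" "U \<subseteq> cspan u m"
  shows "cdim U \<le> m"
proof -
  obtain A where A: "finite A" "A \<subseteq> U" "clin_indep A" "card A = cdim U"
    using cdim_attained[OF assms(1)] by blast
  have "A \<subseteq> cspan u m" using A(2) assms(2) by (rule subset_trans)
  then show ?thesis using card_le_if_clin_indep_subset_cspan[OF A(1,3)] A(4) by simp
qed

lemma cdim_le: "U \<subseteq> cvec N \<Longrightarrow> cdim U \<le> N"
  using cdim_le_if_subset_cspan subset_trans[OF _ cvec_subset_cspan_unit_cvec] by blast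

section \<open>Orthonormal frames\<close>

definition cinner :: "nat \<Rightarrow> (nat \<Rightarrow> complex) \<Rightarrow> (nat \<Rightarrow> complex) \<Rightarrow> complex" where
  "cinner N u v = (\<Sum>l<N. u l * cnj (v l))"

definition orthonormal :: "nat \<Rightarrow> (nat \<Rightarrow> nat \<Rightarrow> complex) \<Rightarrow> nat \<Rightarrow> bool" where
  "orthonormal N u m \<longleftrightarrow> (\<forall>r<m. \<forall>s<m. cinner N (u r) (u s) = (if r = s then 1 else 0))"

lemma cinner_sum_left:
  "finite R \<Longrightarrow> cinner N (\<lambda>l. \<Sum>r\<in>R. c r * u r l) v = (\<Sum>r\<in>R. c r * cinner N (u r) v)"
  unfolding cinner_def by (simp add: sum_distrib_left sum_distrib_right mult.assoc, rule sum.swap)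

lemma cinner_diff_left: "cinner N (\<lambda>l. u l - w l) v = cinner N u v - cinner N w v"
  unfolding cinner_def by (simp add: sum_subtractf left_diff_distrib)

lemma cinner_scale_left: "cinner N (\<lambda>l. c * u l) v = c * cinner N u v"
  unfolding cinner_def by (simp add: sum_distrib_left mult.assoc)

lemma cinner_scale_right: "cinner N u (\<lambda>l. c * v l) = cnj c * cinner N u v"
  unfolding cinner_def by (simp add: sum_distrib_left mult.assoc mult.left_commute)

lemma cinner_commute: "cinner N u v = cnj (cinner N v u)"
  unfolding cinner_def by (simp add: mult.commute)

lemma cinner_self: "cinner N v v = of_real (\<Sum>l<N. (cmod (v l))\<^sup>2)"
  unfolding cinner_def by (simp add: complex_norm_square[symmetric])

lemma orthonormal_coeff:
  assumes "orthonormal N u m" "s < m"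
  shows "cinner N (\<lambda>l. \<Sum>r<m. c r * u r l) (u s) = c s"
proof -
  have "cinner N (\<lambda>l. \<Sum>r<m. c r * u r l) (u s) = (\<Sum>r<m. c r * (if r = s then 1 else 0))"
    using assms unfolding orthonormal_def by (simp add: cinner_sum_left)
  also have "\<dots> = c s" using assms(2) by (simp add: if_distrib cong: if_cong)
  finally show ?thesis .
qed

lemma orthonormal_expansion:
  assumes "orthonormal N u m" "v \<in> cspan u m"
  shows "v = (\<lambda>l. \<Sum>s<m. cinner N v (u s) * u s l)"
proof -
  obtain c where c: "v = (\<lambda>l. \<Sum>r<m. c r * u r l)" using assms(2) by (auto simp: cspan_def)
  show ?thesis using orthonormal_coeff[OF assms(1)] by (simp add: c)
qed

lemma orthonormal_norm_le_1:
  assumes "orthonormal N u m" "r < m" "u r \<in> cvec N"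
  shows "cmod (u r l) \<le> 1"
proof (cases "l < N")
  case True
  have "of_real (\<Sum>l<N. (cmod (u r l))\<^sup>2) = cinner N (u r) (u r)" by (rule cinner_self[symmetric])
  also have "\<dots> = 1" using assms(1,2) unfolding orthonormal_def by simp
  finally have "(\<Sum>l<N. (cmod (u r l))\<^sup>2) = 1" using of_real_eq_1_iff by blast
  then have "(cmod (u r l))\<^sup>2 \<le> 1"
    using member_le_sum[of l "{..<N}" "\<lambda>l. (cmod (u r l))\<^sup>2"] True by simp
  then show ?thesis by (simp add: abs_square_le_1)
next
  case False
  then show ?thesis using assms(3) by (simp add: cvec_def)
qed

lemma orthonormal_clin_indep:
  assumes "orthonormal N u m"
  shows "inj_on u {..<m}" and "clin_indep (u ` {..<m})"
proof -
  show inj: "inj_on u {..<m}"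
    using assms unfolding orthonormal_def by (intro inj_onI) (metis lessThan_iff zero_neq_one)
  show "clin_indep (u ` {..<m})" unfolding clin_indep_def
  proof (intro allI impI ballI)
    fix c v assume "(\<lambda>l. \<Sum>v\<in>u ` {..<m}. c v * v l) = (\<lambda>_. 0)" and "v \<in> u ` {..<m}"
    then obtain s where "s < m" "v = u s" and "(\<lambda>l. \<Sum>r<m. c (u r) * u r l) = (\<lambda>_. 0)"
      by (auto simp: sum.reindex[OF inj])
    then show "c v = 0"
      using orthonormal_coeff[OF assms, of s "\<lambda>r. c (u r)"] by (simp add: cinner_def)
  qed
qed

lemma orthonormal_le_cdim:
  assumes "orthonormal N u m" "\<forall>r<m. u r \<in> U" "U \<subseteq> cvec N"
  shows "m \<le> cdim U"
  using card_le_cdim[OF assms(3), of "u ` {..<m}"] orthonormal_clin_indep[OF assms(1)] assms(2)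
  by (auto simp: card_image)

lemma cdim_cspan_orthonormal:
  assumes "orthonormal N u m" "\<forall>r<m. u r \<in> cvec N"
  shows "cdim (cspan u m) = m"
proof -
  have sub: "cspan u m \<subseteq> cvec N" using csubspace_cspan[OF assms(2)] by (simp add: csubspace_def)
  have "cdim (cspan u m) \<le> m" by (rule cdim_le_if_subset_cspan[OF sub order_refl])
  moreover have "m \<le> cdim (cspan u m)"
    using cspan_base by (intro orthonormal_le_cdim[OF assms(1) _ sub]) blast
  ultimately show ?thesis by simp
qed

lemma normalize_cvec:
  assumes "v \<in> cvec N" "v \<noteq> (\<lambda>_. 0)"
  obtains k where "cinner N (\<lambda>l. k * v l) (\<lambda>l. k * v l) = 1"
proof -
  define S where "S = (\<Sum>l<N. (cmod (v l))\<^sup>2)"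
  obtain l0 where l0: "v l0 \<noteq> 0" using assms(2) by auto
  then have "l0 < N" using assms(1) by (auto simp: cvec_def not_le[symmetric])
  then have "(cmod (v l0))\<^sup>2 \<le> S" unfolding S_def by (intro member_le_sum) auto
  with l0 have S: "S > 0" by (smt (verit) zero_less_power2 norm_eq_zero)
  define k where "k = complex_of_real (1 / sqrt S)"
  have "cinner N (\<lambda>l. k * v l) (\<lambda>l. k * v l) = k * cnj k * cinner N v v"
    by (simp add: cinner_scale_left cinner_scale_right)
  also have "cinner N v v = of_real S" unfolding S_def by (rule cinner_self)
  also have "k * cnj k * of_real S = of_real (1 / sqrt S * (1 / sqrt S) * S)"
    unfolding k_def by (simp only: complex_cnj_complex_of_real of_real_mult)
  also have "1 / sqrt S * (1 / sqrt S) * S = 1"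
    using S real_sqrt_mult_self[of S] by (simp add: field_simps)
  finally show ?thesis using that by simp
qed

lemma orthonormal_fun_upd:
  assumes "orthonormal N u m" "\<forall>s<m. cinner N w (u s) = 0" "cinner N w w = 1"
  shows "orthonormal N (u(m := w)) (Suc m)"
  unfolding orthonormal_def
proof (intro allI impI)
  fix r s assume "r < Suc m" "s < Suc m"
  then consider "r < m" "s < m" | "r = m" "s < m" | "r < m" "s = m" | "r = m" "s = m"
    by linarith
  then show "cinner N ((u(m := w)) r) ((u(m := w)) s) = (if r = s then 1 else 0)"
  proof cases
    case 1
    then show ?thesis using assms(1) by (simp add: orthonormal_def)
  next
    case 2
    then show ?thesis using assms(2) by simp
  next
    case 3
    then show ?thesis using assms(2) cinner_commute[of N "u r" w] by simp
  next
    case 4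
    then show ?thesis using assms(3) by simp
  qed
qed

lemma orthonormal_extend:
  assumes "orthonormal N u m" "\<forall>r<m. u r \<in> cvec N" "a \<in> cvec N" "a \<notin> cspan u m"
  obtains w where "w \<in> cvec N" "orthonormal N (u(m := w)) (Suc m)"
    "w \<in> cspan (u(m := a)) (Suc m)"
proof -
  define b where "b = (\<lambda>r. cinner N a (u r))"
  define e where "e = (\<lambda>l. a l - (\<Sum>r<m. b r * u r l))"
  have proj: "(\<lambda>l. \<Sum>r<m. b r * u r l) \<in> cspan u m" unfolding cspan_def by blast
  have e_cvec: "e \<in> cvec N" using assms(2,3) by (auto simp: e_def cvec_def)
  have "e \<noteq> (\<lambda>_. 0)"
  proof
    assume "e = (\<lambda>_. 0)"
    then have "a = (\<lambda>l. \<Sum>r<m. b r * u r l)" by (simp add: e_def fun_eq_iff)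
    with proj assms(4) show False by simp
  qed
  then obtain k where k: "cinner N (\<lambda>l. k * e l) (\<lambda>l. k * e l) = 1"
    using normalize_cvec[OF e_cvec] by metis
  define w where "w = (\<lambda>l. k * e l)"
  have "cinner N w (u s) = 0" if "s < m" for s
    using orthonormal_coeff[OF assms(1) that]
    by (simp add: w_def e_def b_def cinner_scale_left cinner_diff_left)
  then have "orthonormal N (u(m := w)) (Suc m)"
    using orthonormal_fun_upd[OF assms(1)] k by (simp add: w_def)
  moreover have "w \<in> cvec N" using e_cvec by (simp add: w_def cvec_def)
  moreover have "w = (\<lambda>l. \<Sum>r<Suc m. ((\<lambda>r. - k * b r)(m := k)) r * (u(m := a)) r l)"
    by (simp add: w_def e_def fun_eq_iff algebra_simps sum_distrib_left sum_negf)
  then have "w \<in> cspan (u(m := a)) (Suc m)" unfolding cspan_def by blast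
  ultimately show ?thesis using that by simp
qed

lemma orthonormal_extend_in_csubspace:
  assumes "csubspace N U" "orthonormal N u m" "\<forall>r<m. u r \<in> U" "a \<in> U" "a \<notin> cspan u m"
  obtains w where "w \<in> U" "orthonormal N (u(m := w)) (Suc m)"
proof -
  have sub: "U \<subseteq> cvec N" using assms(1) by (simp add: csubspace_def)
  have "\<forall>r<m. u r \<in> cvec N" "a \<in> cvec N" using assms(3,4) sub by auto
  then obtain w where w: "orthonormal N (u(m := w)) (Suc m)" "w \<in> cspan (u(m := a)) (Suc m)"
    using orthonormal_extend[OF assms(2) _ _ assms(5)] by metis
  have "cspan (u(m := a)) (Suc m) \<subseteq> U"
    using assms(1,3,4) by (intro cspan_subset_csubspace) (auto simp: less_Suc_eq)
  then show ?thesis using w by (intro that) auto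
qed

lemma orthonormal_family_in_csubspace:
  assumes "csubspace N U" "m \<le> cdim U"
  shows "\<exists>u. orthonormal N u m \<and> (\<forall>r<m. u r \<in> U)"
  using assms(2)
proof (induction m)
  case 0
  then show ?case by (simp add: orthonormal_def)
next
  case (Suc m)
  then obtain u where u: "orthonormal N u m" "\<forall>r<m. u r \<in> U" by auto
  have "U \<subseteq> cvec N" using assms(1) by (simp add: csubspace_def)
  then have "\<not> U \<subseteq> cspan u m" using cdim_le_if_subset_cspan Suc.prems by (meson not_less_eq_eq)
  then obtain a where "a \<in> U" "a \<notin> cspan u m" by auto
  then obtain w where w: "w \<in> U" "orthonormal N (u(m := w)) (Suc m)"
    by (rule orthonormal_extend_in_csubspace[OF assms(1) u])
  moreover have "\<forall>r<Suc m. (u(m := w)) r \<in> U" using u(2) w(1) by (simp add: less_Suc_eq)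
  ultimately show ?case by (intro exI[of _ "u(m := w)"] conjI)
qed

lemma orthonormal_basis:
  assumes "csubspace N U"
  obtains u where "orthonormal N u (cdim U)" "\<forall>r<cdim U. u r \<in> cvec N"
    "U = cspan u (cdim U)"
proof -
  have sub: "U \<subseteq> cvec N" using assms by (simp add: csubspace_def)
  obtain u where u: "orthonormal N u (cdim U)" "\<forall>r<cdim U. u r \<in> U"
    using orthonormal_family_in_csubspace[OF assms order_refl] by auto
  have "a \<in> cspan u (cdim U)" if a: "a \<in> U" for a
  proof (rule ccontr)
    assume "a \<notin> cspan u (cdim U)"
    then obtain w where "w \<in> U" "orthonormal N (u(cdim U := w)) (Suc (cdim U))"
      by (rule orthonormal_extend_in_csubspace[OF assms u a])
    then have "Suc (cdim U) \<le> cdim U"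
      using orthonormal_le_cdim[OF _ _ sub] u(2) by (auto simp: less_Suc_eq)
    then show False by simp
  qed
  moreover have "cspan u (cdim U) \<subseteq> U" using cspan_subset_csubspace[OF assms u(2)] .
  ultimately have "U = cspan u (cdim U)" by auto
  then show ?thesis using that u sub by auto
qed

lemma cdim_eq_0_iff:
  assumes "csubspace N U"
  shows "cdim U = 0 \<longleftrightarrow> U = {\<lambda>_. 0}"
proof
  obtain u where u: "orthonormal N u (cdim U)" "\<forall>r<cdim U. u r \<in> cvec N"
    "U = cspan u (cdim U)"
    by (rule orthonormal_basis[OF assms])
  show "U = {\<lambda>_. 0}" if "cdim U = 0" using u(3) that by (simp add: cspan_def)
  show "cdim U = 0" if "U = {\<lambda>_. 0}"
  proof (rule ccontr)
    assume "cdim U \<noteq> 0"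
    then have "cinner N (u 0) (u 0) = 1" "u 0 \<in> U"
      using u cspan_base[of 0 "cdim U" u] by (auto simp: orthonormal_def)
    then show False using that by (simp add: cinner_def)
  qed
qed

lemma matvec_lincomb:
  "matvec a b M (\<lambda>l. \<Sum>r<m. c r * u r l) = (\<lambda>l. \<Sum>r<m. c r * matvec a b M (u r) l)"
  unfolding matvec_def
  by (auto simp: fun_eq_iff sum_distrib_left mult.left_commute intro: sum.swap)

lemma matvec_cspan_subset:
  assumes "csubspace N U" "\<forall>r<m. matvec a b M (u r) \<in> U" "v \<in> cspan u m"
  shows "matvec a b M v \<in> U"
proof -
  obtain c where "v = (\<lambda>l. \<Sum>r<m. c r * u r l)" using assms(3) by (auto simp: cspan_def)
  then have "matvec a b M v = (\<lambda>l. \<Sum>r<m. c r * matvec a b M (u r) l)"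
    by (simp add: matvec_lincomb)
  then have "matvec a b M v \<in> cspan (\<lambda>r. matvec a b M (u r)) m"
    unfolding cspan_def by blast
  then show ?thesis using cspan_subset_csubspace[OF assms(1,2)] by blast
qed

section \<open>Limits of orthonormal frames\<close>

lemma convergent_subseq_finite_family:
  fixes f :: "nat \<Rightarrow> 'k \<Rightarrow> 'a::{heine_borel, real_normed_vector}"
  assumes "finite K" "\<And>n k. k \<in> K \<Longrightarrow> norm (f n k) \<le> B"
  shows "\<exists>\<sigma> L. strict_mono \<sigma> \<and> (\<forall>k\<in>K. (\<lambda>n. f (\<sigma> n) k) \<longlonglongrightarrow> L k)"
  using assms
proof (induction K rule: finite_induct)
  case empty
  show ?case using strict_mono_id by blast
next
  case (insert k K)
  then obtain \<sigma> L where \<sigma>: "strict_mono \<sigma>" "\<forall>k\<in>K. (\<lambda>n. f (\<sigma> n) k) \<longlonglongrightarrow> L k"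
    by auto
  have "bounded (range (\<lambda>n. f (\<sigma> n) k))"
    unfolding bounded_iff using insert.prems by auto
  then obtain \<tau> l where \<tau>: "strict_mono \<tau>" "((\<lambda>n. f (\<sigma> n) k) \<circ> \<tau>) \<longlonglongrightarrow> l"
    using bounded_imp_convergent_subsequence by metis
  have "(\<lambda>n. f ((\<sigma> \<circ> \<tau>) n) k') \<longlonglongrightarrow> (L(k := l)) k'" if "k' \<in> insert k K" for k'
  proof (cases "k' = k")
    case True
    then show ?thesis using \<tau>(2) by (simp add: comp_def)
  next
    case False
    then show ?thesis
      using that LIMSEQ_subseq_LIMSEQ[OF \<sigma>(2)[rule_format] \<tau>(1)] by (simp add: comp_def)
  qed
  then show ?case using strict_mono_o[OF \<sigma>(1) \<tau>(1)] by blast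
qed

lemma orthonormal_limit:
  assumes "\<forall>n. orthonormal N (u n) m" "\<forall>r<m. \<forall>l. (\<lambda>n. u n r l) \<longlonglongrightarrow> w r l"
  shows "orthonormal N w m"
  unfolding orthonormal_def
proof (intro allI impI)
  fix r s assume "r < m" "s < m"
  then have "(\<lambda>n. cinner N (u n r) (u n s)) \<longlonglongrightarrow> cinner N (w r) (w s)"
    unfolding cinner_def using assms(2) by (intro tendsto_intros) auto
  moreover have "(\<lambda>n. cinner N (u n r) (u n s)) = (\<lambda>n. if r = s then 1 else 0)"
    using assms(1) \<open>r < m\<close> \<open>s < m\<close> by (simp add: orthonormal_def)
  ultimately show "cinner N (w r) (w s) = (if r = s then 1 else 0)"
    using LIMSEQ_unique tendsto_const by metis
qed

lemma orthonormal_frames_convergent_subseq: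
  fixes uu :: "nat \<Rightarrow> 'v::finite \<Rightarrow> nat \<Rightarrow> nat \<Rightarrow> complex"
  assumes "\<forall>n i. orthonormal (\<beta> i) (uu n i) (\<gamma> i) \<and> (\<forall>r<\<gamma> i. uu n i r \<in> cvec (\<beta> i))"
  obtains \<sigma> w where "strict_mono \<sigma>"
    "\<forall>i. orthonormal (\<beta> i) (w i) (\<gamma> i) \<and> (\<forall>r<\<gamma> i. w i r \<in> cvec (\<beta> i))"
    "\<forall>i. \<forall>r<\<gamma> i. \<forall>l. (\<lambda>n. uu (\<sigma> n) i r l) \<longlonglongrightarrow> w i r l"
proof -
  define K where "K = (SIGMA i:UNIV. {..<\<gamma> i} \<times> {..<\<beta> i})"
  have "finite K" unfolding K_def by (intro finite_SigmaI) auto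
  moreover have "cmod (uu n i r l) \<le> 1" if "(i, r, l) \<in> K" for n i r l
    using orthonormal_norm_le_1[of "\<beta> i" "uu n i" "\<gamma> i" r l] that assms unfolding K_def by auto
  ultimately obtain \<sigma> L where \<sigma>: "strict_mono \<sigma>"
    "\<forall>(i, r, l)\<in>K. (\<lambda>n. uu (\<sigma> n) i r l) \<longlonglongrightarrow> L (i, r, l)"
    using convergent_subseq_finite_family[of K "\<lambda>n (i, r, l). uu n i r l" 1] by fastforce
  define w where "w = (\<lambda>i r l. if l < \<beta> i then L (i, r, l) else 0)"
  have lim: "\<forall>i. \<forall>r<\<gamma> i. \<forall>l. (\<lambda>n. uu (\<sigma> n) i r l) \<longlonglongrightarrow> w i r l"
  proof (intro allI impI)
    fix i r l assume "r < \<gamma> i"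
    show "(\<lambda>n. uu (\<sigma> n) i r l) \<longlonglongrightarrow> w i r l"
    proof (cases "l < \<beta> i")
      case True
      then show ?thesis using \<sigma>(2) \<open>r < \<gamma> i\<close> by (auto simp: K_def w_def)
    next
      case False
      then show ?thesis using assms \<open>r < \<gamma> i\<close> by (simp add: w_def cvec_def)
    qed
  qed
  have "orthonormal (\<beta> i) (w i) (\<gamma> i)" for i
    using assms lim by (intro orthonormal_limit[of _ "\<lambda>n. uu (\<sigma> n) i"]) auto
  moreover have "w i r \<in> cvec (\<beta> i)" for i r by (simp add: w_def cvec_def)
  ultimately show ?thesis using that[OF \<sigma>(1) _ lim] by auto
qed

lemma cspan_limit:
  assumes "\<forall>n. orthonormal N (u n) m" "\<forall>n. v n \<in> cspan (u n) m"
    and "\<forall>r<m. \<forall>l. (\<lambda>n. u n r l) \<longlonglongrightarrow> w r l" "\<forall>l. (\<lambda>n. v n l) \<longlonglongrightarrow> v0 l"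
  shows "v0 \<in> cspan w m"
proof -
  have lim: "(\<lambda>n. v n l) \<longlonglongrightarrow> (\<Sum>s<m. cinner N v0 (w s) * w s l)" for l
  proof -
    have "(\<lambda>n. \<Sum>s<m. cinner N (v n) (u n s) * u n s l) \<longlonglongrightarrow> (\<Sum>s<m. cinner N v0 (w s) * w s l)"
      unfolding cinner_def using assms(3,4) by (intro tendsto_intros) auto
    moreover have "v n l = (\<Sum>s<m. cinner N (v n) (u n s) * u n s l)" for n
      using orthonormal_expansion[OF assms(1)[rule_format] assms(2)[rule_format]] by metis
    ultimately show ?thesis by simp
  qed
  have "v0 l = (\<Sum>s<m. cinner N v0 (w s) * w s l)" for l
    by (rule LIMSEQ_unique[OF assms(4)[rule_format] lim])
  then have "v0 = (\<lambda>l. \<Sum>s<m. cinner N v0 (w s) * w s l)" by auto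
  then show ?thesis unfolding cspan_def by (rule range_eqI[of _ _ "\<lambda>s. cinner N v0 (w s)"])
qed

lemma matvec_tendsto:
  assumes "\<forall>p q. (\<lambda>n. M n p q) \<longlonglongrightarrow> M0 p q" "\<forall>l. (\<lambda>n. v n l) \<longlonglongrightarrow> v0 l"
  shows "(\<lambda>n. matvec a b (M n) (v n) l) \<longlonglongrightarrow> matvec a b M0 v0 l"
  unfolding matvec_def using assms by (cases "l < a") (auto intro!: tendsto_intros)

section \<open>Subrepresentations and semistability\<close>

definition is_subrep :: "('a \<Rightarrow> 'v) \<Rightarrow> ('a \<Rightarrow> 'v) \<Rightarrow> ('v \<Rightarrow> nat) \<Rightarrow> 'a qrep
    \<Rightarrow> ('v \<Rightarrow> (nat \<Rightarrow> complex) set) \<Rightarrow> bool" where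
  "is_subrep src tgt \<beta> y U \<longleftrightarrow> (\<forall>i. csubspace (\<beta> i) (U i)) \<and>
     (\<forall>h. \<forall>v\<in>U (src h). matvec (\<beta> (tgt h)) (\<beta> (src h)) (y h) v \<in> U (tgt h))"

definition has_subrep_dim :: "('a \<Rightarrow> 'v) \<Rightarrow> ('a \<Rightarrow> 'v) \<Rightarrow> ('v \<Rightarrow> nat) \<Rightarrow> 'a qrep
    \<Rightarrow> ('v \<Rightarrow> nat) \<Rightarrow> bool" where
  "has_subrep_dim src tgt \<beta> y \<gamma> \<longleftrightarrow> (\<exists>U. is_subrep src tgt \<beta> y U \<and> (\<forall>i. cdim (U i) = \<gamma> i))"

lemma semistable_iff_has_subrep_dim:
  "semistable src tgt \<theta> \<beta> y \<longleftrightarrow> y \<in> Rep src tgt \<beta> \<and>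
     (\<forall>\<gamma>. (\<forall>i. \<gamma> i \<le> \<beta> i) \<and> (\<exists>i. \<gamma> i \<noteq> 0) \<and> has_subrep_dim src tgt \<beta> y \<gamma>
        \<longrightarrow> slope \<theta> \<gamma> \<le> slope \<theta> \<beta>)"
  (is "_ \<longleftrightarrow> _ \<and> ?no_destab")
proof -
  have "?no_destab \<longleftrightarrow> (\<forall>U. is_subrep src tgt \<beta> y U \<and> (\<exists>i. U i \<noteq> {\<lambda>_. 0})
      \<longrightarrow> slope \<theta> (\<lambda>i. cdim (U i)) \<le> slope \<theta> \<beta>)"
  proof (intro iffI allI impI)
    fix U assume "?no_destab" and U: "is_subrep src tgt \<beta> y U \<and> (\<exists>i. U i \<noteq> {\<lambda>_. 0})"
    then have cs: "csubspace (\<beta> i) (U i)" for i by (simp add: is_subrep_def)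
    have "\<forall>i. cdim (U i) \<le> \<beta> i" using cs by (intro allI cdim_le) (simp add: csubspace_def)
    moreover have "\<exists>i. cdim (U i) \<noteq> 0" using U cdim_eq_0_iff[OF cs] by auto
    ultimately show "slope \<theta> (\<lambda>i. cdim (U i)) \<le> slope \<theta> \<beta>"
      using \<open>?no_destab\<close> U by (auto simp: has_subrep_dim_def)
  next
    fix \<gamma> assume no_destab: "\<forall>U. is_subrep src tgt \<beta> y U \<and> (\<exists>i. U i \<noteq> {\<lambda>_. 0})
        \<longrightarrow> slope \<theta> (\<lambda>i. cdim (U i)) \<le> slope \<theta> \<beta>"
      and \<gamma>: "(\<forall>i. \<gamma> i \<le> \<beta> i) \<and> (\<exists>i. \<gamma> i \<noteq> 0) \<and> has_subrep_dim src tgt \<beta> y \<gamma>"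
    then obtain U where U: "is_subrep src tgt \<beta> y U" "\<forall>i. cdim (U i) = \<gamma> i"
      by (auto simp: has_subrep_dim_def)
    then have "\<exists>i. U i \<noteq> {\<lambda>_. 0}" using \<gamma> cdim_eq_0_iff by (metis is_subrep_def)
    moreover have "(\<lambda>i. cdim (U i)) = \<gamma>" using U(2) by auto
    ultimately show "slope \<theta> \<gamma> \<le> slope \<theta> \<beta>" using no_destab U(1) by metis
  qed
  then show ?thesis unfolding semistable_def is_subrep_def by simp
qed

definition subrep_frame :: "('a \<Rightarrow> 'v) \<Rightarrow> ('a \<Rightarrow> 'v) \<Rightarrow> ('v \<Rightarrow> nat) \<Rightarrow> 'a qrep
    \<Rightarrow> ('v \<Rightarrow> nat) \<Rightarrow> ('v \<Rightarrow> nat \<Rightarrow> nat \<Rightarrow> complex) \<Rightarrow> bool" where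
  "subrep_frame src tgt \<beta> y \<gamma> u \<longleftrightarrow>
     (\<forall>i. orthonormal (\<beta> i) (u i) (\<gamma> i) \<and> (\<forall>r<\<gamma> i. u i r \<in> cvec (\<beta> i))) \<and>
     (\<forall>h. \<forall>r<\<gamma> (src h).
        matvec (\<beta> (tgt h)) (\<beta> (src h)) (y h) (u (src h) r) \<in> cspan (u (tgt h)) (\<gamma> (tgt h)))"

lemma has_subrep_dim_iff_subrep_frame:
  "has_subrep_dim src tgt \<beta> y \<gamma> \<longleftrightarrow> (\<exists>u. subrep_frame src tgt \<beta> y \<gamma> u)"
proof
  assume "has_subrep_dim src tgt \<beta> y \<gamma>"
  then obtain U where U: "is_subrep src tgt \<beta> y U" "\<forall>i. cdim (U i) = \<gamma> i"
    unfolding has_subrep_dim_def by auto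
  then have "\<forall>i. \<exists>u. orthonormal (\<beta> i) u (\<gamma> i) \<and> (\<forall>r<\<gamma> i. u r \<in> cvec (\<beta> i)) \<and>
      U i = cspan u (\<gamma> i)"
    using orthonormal_basis unfolding is_subrep_def by metis
  then obtain u where u: "\<forall>i. orthonormal (\<beta> i) (u i) (\<gamma> i) \<and>
      (\<forall>r<\<gamma> i. u i r \<in> cvec (\<beta> i)) \<and> U i = cspan (u i) (\<gamma> i)"
    by metis
  have "matvec (\<beta> (tgt h)) (\<beta> (src h)) (y h) (u (src h) r) \<in> cspan (u (tgt h)) (\<gamma> (tgt h))"
    if "r < \<gamma> (src h)" for h r
    using U(1) u cspan_base[OF that, of "u (src h)"] unfolding is_subrep_def by metis
  then show "\<exists>u. subrep_frame src tgt \<beta> y \<gamma> u"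
    using u unfolding subrep_frame_def by blast
next
  assume "\<exists>u. subrep_frame src tgt \<beta> y \<gamma> u"
  then obtain u where u: "subrep_frame src tgt \<beta> y \<gamma> u" by blast
  define U where "U = (\<lambda>i. cspan (u i) (\<gamma> i))"
  have cs: "csubspace (\<beta> i) (U i)" for i
    using u csubspace_cspan by (simp add: U_def subrep_frame_def)
  have "matvec (\<beta> (tgt h)) (\<beta> (src h)) (y h) v \<in> U (tgt h)" if "v \<in> U (src h)" for h v
  proof (rule matvec_cspan_subset[OF cs])
    show "\<forall>r<\<gamma> (src h). matvec (\<beta> (tgt h)) (\<beta> (src h)) (y h) (u (src h) r) \<in> U (tgt h)"
      using u by (simp add: U_def subrep_frame_def)
    show "v \<in> cspan (u (src h)) (\<gamma> (src h))" using that by (simp add: U_def)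
  qed
  then have "is_subrep src tgt \<beta> y U" unfolding is_subrep_def using cs by auto
  moreover have "cdim (U i) = \<gamma> i" for i
    using u cdim_cspan_orthonormal[of "\<beta> i" "u i" "\<gamma> i"] by (simp add: U_def subrep_frame_def)
  ultimately show "has_subrep_dim src tgt \<beta> y \<gamma>" unfolding has_subrep_dim_def by auto
qed

lemma has_subrep_dim_limit:
  fixes src tgt :: "'a \<Rightarrow> 'v::finite"
  assumes "\<forall>n. has_subrep_dim src tgt \<beta> (Y n) \<gamma>" "\<forall>h p q. (\<lambda>n. Y n h p q) \<longlonglongrightarrow> y h p q"
  shows "has_subrep_dim src tgt \<beta> y \<gamma>"
proof -
  obtain uu where uu: "\<forall>n. subrep_frame src tgt \<beta> (Y n) \<gamma> (uu n)"
    using assms(1) unfolding has_subrep_dim_iff_subrep_frame by metis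
  obtain \<sigma> w where \<sigma>: "strict_mono \<sigma>"
    and w: "\<forall>i. orthonormal (\<beta> i) (w i) (\<gamma> i) \<and> (\<forall>r<\<gamma> i. w i r \<in> cvec (\<beta> i))"
    and conv: "\<forall>i. \<forall>r<\<gamma> i. \<forall>l. (\<lambda>n. uu (\<sigma> n) i r l) \<longlonglongrightarrow> w i r l"
    by (rule orthonormal_frames_convergent_subseq[of \<beta> uu \<gamma>]) (use uu in \<open>auto simp: subrep_frame_def\<close>)
  have "matvec (\<beta> (tgt h)) (\<beta> (src h)) (y h) (w (src h) r) \<in> cspan (w (tgt h)) (\<gamma> (tgt h))"
    if r: "r < \<gamma> (src h)" for h r
  proof (rule cspan_limit[of "\<beta> (tgt h)" "\<lambda>n. uu (\<sigma> n) (tgt h)"])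
    let ?v = "\<lambda>n. matvec (\<beta> (tgt h)) (\<beta> (src h)) (Y (\<sigma> n) h) (uu (\<sigma> n) (src h) r)"
    show "\<forall>n. ?v n \<in> cspan (uu (\<sigma> n) (tgt h)) (\<gamma> (tgt h))"
      using uu r by (simp add: subrep_frame_def)
    have "\<forall>p q. (\<lambda>n. Y (\<sigma> n) h p q) \<longlonglongrightarrow> y h p q"
      using LIMSEQ_subseq_LIMSEQ[OF assms(2)[rule_format] \<sigma>] by (simp add: comp_def)
    then show "\<forall>l. (\<lambda>n. ?v n l) \<longlonglongrightarrow> matvec (\<beta> (tgt h)) (\<beta> (src h)) (y h) (w (src h) r) l"
      using conv r by (intro allI matvec_tendsto) auto
  qed (use uu conv in \<open>auto simp: subrep_frame_def\<close>)
  then have "subrep_frame src tgt \<beta> y \<gamma> w" using w by (simp add: subrep_frame_def)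
  then show ?thesis unfolding has_subrep_dim_iff_subrep_frame by blast
qed

lemma closed_has_subrep_dim:
  fixes src tgt :: "'a \<Rightarrow> 'v::finite" and Y :: "'t::metric_space \<Rightarrow> 'a qrep"
  assumes "\<forall>h p q. continuous_on UNIV (\<lambda>t. Y t h p q)"
  shows "closed {t. has_subrep_dim src tgt \<beta> (Y t) \<gamma>}"
  unfolding closed_sequential_limits
proof (intro allI impI)
  fix x l assume "(\<forall>n. x n \<in> {t. has_subrep_dim src tgt \<beta> (Y t) \<gamma>}) \<and> x \<longlonglongrightarrow> l"
  then have x: "\<forall>n. has_subrep_dim src tgt \<beta> (Y (x n)) \<gamma>" and lim: "x \<longlonglongrightarrow> l" by auto
  have "(\<lambda>n. Y (x n) h p q) \<longlonglongrightarrow> Y l h p q" for h p q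
    using continuous_on_tendsto_compose[OF assms[rule_format] lim] by simp
  then show "l \<in> {t. has_subrep_dim src tgt \<beta> (Y t) \<gamma>}"
    using has_subrep_dim_limit[OF x] by simp
qed

lemma finite_bounded_dim_vectors: "finite {\<gamma> :: 'v::finite \<Rightarrow> nat. \<forall>i. \<gamma> i \<le> \<beta> i}"
proof -
  have "{\<gamma> :: 'v \<Rightarrow> nat. \<forall>i. \<gamma> i \<le> \<beta> i} = Pi\<^sub>E UNIV (\<lambda>i. {..\<beta> i})"
    by (auto simp: PiE_UNIV_domain Pi_def)
  then show ?thesis by (simp add: finite_PiE)
qed

lemma open_semistable_locus:
  fixes src tgt :: "'a \<Rightarrow> 'v::finite" and Y :: "'t::metric_space \<Rightarrow> 'a qrep"
  assumes "\<forall>t. Y t \<in> Rep src tgt \<beta>" "\<forall>h p q. continuous_on UNIV (\<lambda>t. Y t h p q)"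
  shows "open {t. semistable src tgt \<theta> \<beta> (Y t)}"
proof -
  define \<Gamma> where "\<Gamma> = {\<gamma>. (\<forall>i. \<gamma> i \<le> \<beta> i) \<and> (\<exists>i. \<gamma> i \<noteq> 0) \<and> slope \<theta> \<beta> < slope \<theta> \<gamma>}"
  have locus: "{t. semistable src tgt \<theta> \<beta> (Y t)}
      = - (\<Union>\<gamma>\<in>\<Gamma>. {t. has_subrep_dim src tgt \<beta> (Y t) \<gamma>})"
    using assms(1) by (auto simp: semistable_iff_has_subrep_dim \<Gamma>_def not_le)
  have "finite \<Gamma>" unfolding \<Gamma>_def by (rule finite_subset[OF _ finite_bounded_dim_vectors]) auto
  then have "closed (\<Union>\<gamma>\<in>\<Gamma>. {t. has_subrep_dim src tgt \<beta> (Y t) \<gamma>})"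
    using closed_has_subrep_dim[OF assms(2)] by (intro closed_UN) auto
  then show ?thesis unfolding locus by (rule open_Compl)
qed

section \<open>Lines in \<open>RepF\<close> and Zariski closure\<close>

definition qline :: "'a qrep \<Rightarrow> 'a qrep \<Rightarrow> complex \<Rightarrow> 'a qrep" where
  "qline x y t = (\<lambda>h i j. x h i j + t * (y h i j - x h i j))"

lemma qline_0 [simp]: "qline x y 0 = x"
  and qline_1 [simp]: "qline x y 1 = y"
  by (simp_all add: qline_def)

lemma continuous_on_qline: "continuous_on UNIV (\<lambda>t. qline x y t h i j)"
  unfolding qline_def by (intro continuous_intros)

lemma qline_Rep: "x \<in> Rep src tgt \<beta> \<Longrightarrow> y \<in> Rep src tgt \<beta> \<Longrightarrow> qline x y t \<in> Rep src tgt \<beta>"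
  unfolding Rep_def qline_def by auto

lemma flagsp_affine:
  assumes "v \<in> flagsp \<alpha> d g k i" "w \<in> flagsp \<alpha> d g k i"
  shows "(\<lambda>l. v l + t * (w l - v l)) \<in> flagsp \<alpha> d g k i"
proof -
  obtain c1 c2 where
    "v = (\<lambda>p. if p < \<alpha> i then (\<Sum>l<psum d k i. c1 l * g i p l) else 0)"
    "w = (\<lambda>p. if p < \<alpha> i then (\<Sum>l<psum d k i. c2 l * g i p l) else 0)"
    using assms unfolding flagsp_def by blast
  then have "(\<lambda>l. v l + t * (w l - v l)) =
    (\<lambda>p. if p < \<alpha> i then (\<Sum>l<psum d k i. (c1 l + t * (c2 l - c1 l)) * g i p l) else 0)"
    by (auto simp: fun_eq_iff algebra_simps sum.distrib sum_subtractf sum_distrib_left)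
  then show ?thesis
    unfolding flagsp_def mem_Collect_eq by (rule exI[of _ "\<lambda>l. c1 l + t * (c2 l - c1 l)"])
qed

lemma matvec_qline:
  "matvec m n (qline x y t h) v
     = (\<lambda>l. matvec m n (x h) v l + t * (matvec m n (y h) v l - matvec m n (x h) v l))"
  unfolding matvec_def qline_def
  by (auto simp: fun_eq_iff algebra_simps sum.distrib sum_subtractf sum_distrib_left)

lemma qline_RepF:
  assumes "x \<in> RepF src tgt \<alpha> s d g" "y \<in> RepF src tgt \<alpha> s d g"
  shows "qline x y t \<in> RepF src tgt \<alpha> s d g"
  using assms qline_Rep unfolding RepF_def by (auto simp: matvec_qline intro!: flagsp_affine)

lemma phi_qline:
  "phi src tgt \<alpha> d g ginv k (qline x y t)
     = qline (phi src tgt \<alpha> d g ginv k x) (phi src tgt \<alpha> d g ginv k y) t"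
  unfolding phi_def qline_def
  by (auto simp: fun_eq_iff algebra_simps sum.distrib sum_subtractf sum_distrib_left)

lemma phi_Rep: "phi src tgt \<alpha> d g ginv k x \<in> Rep src tgt (d k)"
  unfolding phi_def Rep_def by auto

lemma open_RepFss_qline:
  fixes src tgt :: "'a \<Rightarrow> 'v::finite"
  assumes "x \<in> RepF src tgt \<alpha> s d g" "y \<in> RepF src tgt \<alpha> s d g"
  shows "open {t. qline x y t \<in> RepFss src tgt \<theta> \<alpha> s d g ginv}"
proof -
  let ?phi = "phi src tgt \<alpha> d g ginv"
  have "{t. qline x y t \<in> RepFss src tgt \<theta> \<alpha> s d g ginv}
      = (\<Inter>k\<in>{1..s}. {t. semistable src tgt \<theta> (d k) (qline (?phi k x) (?phi k y) t)})"
    using qline_RepF[OF assms] by (auto simp: RepFss_def phi_qline)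
  moreover have "open {t. semistable src tgt \<theta> (d k) (qline (?phi k x) (?phi k y) t)}" for k
    by (intro open_semistable_locus allI qline_Rep phi_Rep continuous_on_qline)
  ultimately show ?thesis by auto
qed

lemma polyfun_qline:
  assumes "polyfun P"
  shows "\<exists>q. \<forall>t. P (qline x y t) = poly q t"
  using assms
proof (induction rule: polyfun.induct)
  case (pconst c)
  show ?case by (rule exI[of _ "[:c:]"]) simp
next
  case (pcoord h i j)
  show ?case by (rule exI[of _ "[:x h i j, y h i j - x h i j:]"]) (simp add: qline_def mult.commute)
next
  case (padd f g)
  then obtain q1 q2 where "\<forall>t. f (qline x y t) = poly q1 t" "\<forall>t. g (qline x y t) = poly q2 t"
    by blast
  then show ?case by (intro exI[of _ "q1 + q2"]) simp
next
  case (pmult f g)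
  then obtain q1 q2 where "\<forall>t. f (qline x y t) = poly q1 t" "\<forall>t. g (qline x y t) = poly q2 t"
    by blast
  then show ?case by (intro exI[of _ "q1 * q2"]) simp
qed

lemma in_zclosure_if_infinite_qline:
  assumes "infinite {t. qline x y t \<in> S}"
  shows "y \<in> zclosure S"
  unfolding zclosure_def
proof (intro InterI, clarify)
  fix Z assume "zclosed Z" "S \<subseteq> Z"
  then obtain P where P: "\<forall>p\<in>P. polyfun p" "Z = {x. \<forall>p\<in>P. p x = 0}"
    unfolding zclosed_def by auto
  have "p y = 0" if p: "p \<in> P" for p
  proof -
    obtain q where q: "\<forall>t. p (qline x y t) = poly q t" using polyfun_qline[of p x y] P(1) p by blast
    have "{t. qline x y t \<in> S} \<subseteq> {t. poly q t = 0}"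
    proof
      fix t assume "t \<in> {t. qline x y t \<in> S}"
      then have "qline x y t \<in> Z" using \<open>S \<subseteq> Z\<close> by auto
      then have "p (qline x y t) = 0" using P(2) p by blast
      then show "t \<in> {t. poly q t = 0}" using q by simp
    qed
    then have "q = 0" using assms poly_roots_finite finite_subset by metis
    then show "p y = 0" using q[rule_format, of 1] by simp
  qed
  then show "y \<in> Z" using P(2) by simp
qed

lemma zclosure_eq_if_dense:
  assumes "S \<subseteq> T" "T \<subseteq> zclosure S"
  shows "zclosure S = zclosure T"
proof -
  have "T \<subseteq> Z \<longleftrightarrow> S \<subseteq> Z" if "zclosed Z" for Z
    using assms that unfolding zclosure_def by blast
  then have "{Z. zclosed Z \<and> S \<subseteq> Z} = {Z. zclosed Z \<and> T \<subseteq> Z}" by blast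
  then show ?thesis unfolding zclosure_def by simp
qed

theorem lemma4p5:
  fixes src tgt :: "'a::finite \<Rightarrow> 'v::finite"
    and \<theta> :: "'v \<Rightarrow> int" and \<alpha> :: "'v \<Rightarrow> nat"
    and s :: nat and d :: "nat \<Rightarrow> 'v \<Rightarrow> nat"
    and g ginv :: "'v \<Rightarrow> nat \<Rightarrow> nat \<Rightarrow> complex"
  assumes "\<forall>k\<in>{1..s}. \<exists>i. d k i \<noteq> 0"
    and "\<forall>i. (\<Sum>k\<in>{1..s}. d k i) = \<alpha> i"
    and "is_adapted_basis \<alpha> g ginv"
    and "RepFss src tgt \<theta> \<alpha> s d g ginv \<noteq> {}"
  shows "zdim (RepFss src tgt \<theta> \<alpha> s d g ginv) = zdim (RepF src tgt \<alpha> s d g)"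
proof -
  let ?RF = "RepF src tgt \<alpha> s d g" and ?RS = "RepFss src tgt \<theta> \<alpha> s d g ginv"
  obtain x0 where x0: "x0 \<in> ?RS" using assms(4) by blast
  then have x0F: "x0 \<in> ?RF" by (simp add: RepFss_def)
  have "y \<in> zclosure ?RS" if y: "y \<in> ?RF" for y
  proof (rule in_zclosure_if_infinite_qline[of x0])
    have "open {t. qline x0 y t \<in> ?RS}" "0 \<in> {t. qline x0 y t \<in> ?RS}"
      using open_RepFss_qline[OF x0F y] x0 by auto
    then show "infinite {t. qline x0 y t \<in> ?RS}"
      using islimpt_UNIV[of 0] islimpt_eq_acc_point by (metis Int_UNIV_right)
  qed
  then have "zclosure ?RS = zclosure ?RF"
    by (intro zclosure_eq_if_dense) (auto simp: RepFss_def)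
  then show ?thesis unfolding zdim_def by simp
qed

end
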